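(* Consider the system (with $c,k,b,s,\nu>0$, $h\in\mathbb{R}$) $$\frac{df}{dt}=w(f)(1-f)f-\nu f-h(1-2x),\qquad \frac{dx}{dt}=s\,x(1-x)(1-2f),\qquad w(f)=\frac{c}{1+e^{-k\frac{f}{1-f}+b}}.$$ The system undergoes a transcritical bifurcation at $(f^*,x^* )=(1/2,1)$, at the parameter value $$h^{**}=-\frac{c}{4(1+e^{b-k})}+\frac{\nu}{2},$$ where the branch of fixed points with $x=1$ (given by $h=-w(f)(1-f)f+\nu f$) intersects the branch of fixed points with $f=1/2$ (given, for $h\ne0$, by $x=\tfrac12\left(1+\tfrac{h^{**}}{h}\right)$). If $\lambda_1:=\dfrac{c k e^{b-k}}{(1+e^{b-k})^2}-\nu<0$ and $h^{**}>0$, then the two branches $x=1$ and $f=1/2$ exchange stability at this bifurcation point.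
   Context: The Jacobian of the system is $$J=\begin{pmatrix} w'(f)(f-f^2)+w(f)(1-2f)-\nu & 2h\\ -2s\,x(1-x) & s(1-2x)(1-2f)\end{pmatrix}.$$ A fixed point is stable if all eigenvalues of $J$ have negative real part and unstable if some eigenvalue has positive real part. *)

theory Defs
  imports "HOL-Analysis.Analysis"
begin

definition wfit :: "real \<Rightarrow> real \<Rightarrow> real \<Rightarrow> real \<Rightarrow> real" where
  "wfit c k b f = c / (1 + exp (- k * (f / (1 - f)) + b))"

definition rhs_f :: "real \<Rightarrow> real \<Rightarrow> real \<Rightarrow> real \<Rightarrow> real \<Rightarrow> real \<Rightarrow> real \<Rightarrow> real" where
  "rhs_f c k b \<nu> h f x = wfit c k b f * (1 - f) * f - \<nu> * f - h * (1 - 2 * x)"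

definition rhs_x :: "real \<Rightarrow> real \<Rightarrow> real \<Rightarrow> real" where
  "rhs_x s f x = s * x * (1 - x) * (1 - 2 * f)"

definition fixed_point :: "real \<Rightarrow> real \<Rightarrow> real \<Rightarrow> real \<Rightarrow> real \<Rightarrow> real \<Rightarrow> real \<Rightarrow> real \<Rightarrow> bool" where
  "fixed_point c k b s \<nu> h f x \<longleftrightarrow> rhs_f c k b \<nu> h f x = 0 \<and> rhs_x s f x = 0"

definition J11 :: "real \<Rightarrow> real \<Rightarrow> real \<Rightarrow> real \<Rightarrow> real \<Rightarrow> real" where
  "J11 c k b \<nu> f = deriv (wfit c k b) f * (f - f^2) + wfit c k b f * (1 - 2 * f) - \<nu>"

definition J12 :: "real \<Rightarrow> real" where
  "J12 h = 2 * h"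

definition J21 :: "real \<Rightarrow> real \<Rightarrow> real" where
  "J21 s x = - 2 * s * x * (1 - x)"

definition J22 :: "real \<Rightarrow> real \<Rightarrow> real \<Rightarrow> real" where
  "J22 s f x = s * (1 - 2 * x) * (1 - 2 * f)"

definition jac_eigenvalue :: "real \<Rightarrow> real \<Rightarrow> real \<Rightarrow> real \<Rightarrow> real \<Rightarrow> real \<Rightarrow> real \<Rightarrow> real \<Rightarrow> complex \<Rightarrow> bool" where
  "jac_eigenvalue c k b s \<nu> h f x z \<longleftrightarrow>
     (complex_of_real (J11 c k b \<nu> f) - z) * (complex_of_real (J22 s f x) - z)
       - complex_of_real (J12 h) * complex_of_real (J21 s x) = 0"

definition stable_fp :: "real \<Rightarrow> real \<Rightarrow> real \<Rightarrow> real \<Rightarrow> real \<Rightarrow> real \<Rightarrow> real \<Rightarrow> real \<Rightarrow> bool" where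
  "stable_fp c k b s \<nu> h f x \<longleftrightarrow> (\<forall>z. jac_eigenvalue c k b s \<nu> h f x z \<longrightarrow> Re z < 0)"

definition unstable_fp :: "real \<Rightarrow> real \<Rightarrow> real \<Rightarrow> real \<Rightarrow> real \<Rightarrow> real \<Rightarrow> real \<Rightarrow> real \<Rightarrow> bool" where
  "unstable_fp c k b s \<nu> h f x \<longleftrightarrow> (\<exists>z. jac_eigenvalue c k b s \<nu> h f x z \<and> Re z > 0)"

definition hss :: "real \<Rightarrow> real \<Rightarrow> real \<Rightarrow> real \<Rightarrow> real" where
  "hss c k b \<nu> = - c / (4 * (1 + exp (b - k))) + \<nu> / 2"

definition lambda1 :: "real \<Rightarrow> real \<Rightarrow> real \<Rightarrow> real \<Rightarrow> real" where
  "lambda1 c k b \<nu> = c * k * exp (b - k) / (1 + exp (b - k))^2 - \<nu>"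

end

theory Submission
  imports Defs
begin

text \<open>On the line \<open>x = 1\<close> the fixed points form the graph \<open>h = \<nu> f - w(f)(1 - f) f\<close>, whose
slope at \<open>f = 1/2\<close> is \<open>-\<lambda>\<^sub>1 > 0\<close>; so near the bifurcation point \<open>f < 1/2\<close> exactly when
\<open>h < h\<^sup>*\<^sup>*\<close>. There \<open>J\<^sub>2\<^sub>1 = 0\<close>, and the eigenvalues \<open>J\<^sub>1\<^sub>1 < 0\<close> and \<open>s (2f - 1)\<close> show
stability for \<open>h < h\<^sup>*\<^sup>*\<close> and a saddle for \<open>h > h\<^sup>*\<^sup>*\<close>. On the line \<open>f = 1/2\<close> the fixed
points satisfy \<open>h (2x - 1) = h\<^sup>*\<^sup>*\<close>, so \<open>x < 1\<close> exactly when \<open>h > h\<^sup>*\<^sup>*\<close>; there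
\<open>J\<^sub>2\<^sub>2 = 0\<close>, the trace is \<open>\<lambda>\<^sub>1 < 0\<close> and the determinant \<open>4 h s x (1 - x)\<close> changes sign
with \<open>1 - x\<close>. In both cases stability is read off from trace and determinant.\<close>

lemma strict_mono_on_attains_nearby:
  fixes g :: "real \<Rightarrow> real"
  assumes "d > 0" "strict_mono_on {a - d..a + d} g" "continuous_on {a - d..a + d} g" "\<epsilon> > 0"
  shows "\<exists>\<eta>>0. \<forall>y. \<bar>y - g a\<bar> < \<eta> \<longrightarrow> (\<exists>t. \<bar>t - a\<bar> < \<epsilon> \<and> g t = y)"
proof -
  define e where "e = min \<epsilon> d / 2"
  have e: "0 < e" "e < \<epsilon>" "e < d" using assms by (auto simp: e_def)
  have below: "g (a - e) < g a" and above: "g a < g (a + e)"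
    using e by (auto intro!: strict_mono_onD[OF assms(2)])
  have cont: "continuous_on {a - e..a + e} g"
    using e by (auto intro: continuous_on_subset[OF assms(3)])
  show ?thesis
  proof (rule exI[of _ "min (g a - g (a - e)) (g (a + e) - g a)"], intro conjI allI impI)
    show "min (g a - g (a - e)) (g (a + e) - g a) > 0" using below above by simp
    fix y assume "\<bar>y - g a\<bar> < min (g a - g (a - e)) (g (a + e) - g a)"
    then have "g (a - e) \<le> y" "y \<le> g (a + e)" by auto
    then obtain t where "a - e \<le> t" "t \<le> a + e" "g t = y"
      using IVT'[OF _ _ _ cont] e by force
    then show "\<exists>t. \<bar>t - a\<bar> < \<epsilon> \<and> g t = y" using e by (intro exI[of _ t]) auto
  qed
qed

lemma exists_solution_near_one:
  fixes H :: real
  assumes "H > 0" "\<epsilon> > 0"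
  shows "\<exists>\<eta>>0. \<forall>h. \<bar>h - H\<bar> < \<eta> \<longrightarrow> (\<exists>x. \<bar>x - 1\<bar> < \<epsilon> \<and> h * (2 * x - 1) = H)"
proof (rule exI[of _ "min (H/2) (\<epsilon> * H)"], intro conjI allI impI)
  show "min (H/2) (\<epsilon> * H) > 0" using assms by simp
  fix h assume h: "\<bar>h - H\<bar> < min (H/2) (\<epsilon> * H)"
  then have "h > H/2" by linarith
  define x where "x = (1 + H/h) / 2"
  have "\<bar>x - 1\<bar> = \<bar>H - h\<bar> / (2 * h)"
    using \<open>h > H/2\<close> assms by (simp add: x_def field_simps abs_divide)
  also have "\<dots> < \<epsilon>"
  proof -
    have "\<bar>H - h\<bar> < \<epsilon> * H" using h by (simp add: abs_minus_commute)
    also have "\<dots> < \<epsilon> * (2 * h)" using \<open>h > H/2\<close> assms by simp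
    finally show ?thesis using \<open>h > H/2\<close> assms by (simp add: divide_less_eq)
  qed
  finally show "\<exists>x. \<bar>x - 1\<bar> < \<epsilon> \<and> h * (2 * x - 1) = H"
    using \<open>h > H/2\<close> assms by (intro exI[of _ x]) (auto simp: x_def field_simps)
qed

lemma char_root_Re_Im:
  assumes "(of_real A - z) * (of_real B - z) - of_real C = 0"
  shows "(A - Re z) * (B - Re z) - (Im z)^2 = C" "Im z * (A + B - 2 * Re z) = 0"
proof -
  have "Re ((of_real A - z) * (of_real B - z) - of_real C) = 0"
    "Im ((of_real A - z) * (of_real B - z) - of_real C) = 0"
    using assms by simp_all
  then show "(A - Re z) * (B - Re z) - (Im z)^2 = C" "Im z * (A + B - 2 * Re z) = 0"
    by (simp_all add: algebra_simps power2_eq_square)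
qed

lemma char_root_Re_neg:
  assumes "A + B < 0" "A * B - C > 0" "(of_real A - z) * (of_real B - z) - of_real C = 0"
  shows "Re z < 0"
proof (cases "Im z = 0")
  case True
  text \<open>A real root \<open>r \<ge> 0\<close> would make \<open>r\<^sup>2 - (A + B) r + (A B - C)\<close> positive.\<close>
  have "(A - Re z) * (B - Re z) = A * B - C + (Re z)^2 - Re z * (A + B) + C"
    by (simp add: algebra_simps power2_eq_square)
  moreover have "Re z \<ge> 0 \<Longrightarrow> Re z * (A + B) \<le> 0"
    using assms(1) by (simp add: mult_nonneg_nonpos)
  ultimately show ?thesis
    using char_root_Re_Im(1)[OF assms(3)] True assms(2) zero_le_power2[of "Re z"] by fastforce
next
  case False
  then show ?thesis using char_root_Re_Im(2)[OF assms(3)] assms(1) by simp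
qed

lemma char_root_pos_if_det_neg:
  assumes "A * B - C < 0"
  shows "\<exists>z. (of_real A - z) * (of_real B - z) - of_real C = 0 \<and> Re z > 0"
proof -
  define D where "D = (A + B)^2 - 4 * (A * B - C)"
  define r where "r = (A + B + sqrt D) / 2"
  have "\<bar>A + B\<bar>^2 < D" using assms by (simp add: D_def)
  then have "D \<ge> 0" "\<bar>A + B\<bar> < sqrt D"
    using zero_le_power2[of "\<bar>A + B\<bar>"] real_less_rsqrt by (linarith, blast)
  then have "sqrt D * sqrt D = (A - B)^2 + 4 * C" by (simp add: D_def algebra_simps power2_eq_square)
  then have "(A - r) * (B - r) - C = 0" unfolding r_def by (simp add: field_simps power2_eq_square)
  moreover have "r > 0" using \<open>\<bar>A + B\<bar> < sqrt D\<close> by (simp add: r_def)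
  ultimately show ?thesis
    by (intro exI[of _ "of_real r"]) (simp flip: of_real_diff of_real_mult)
qed

definition dwfit :: "real \<Rightarrow> real \<Rightarrow> real \<Rightarrow> real \<Rightarrow> real" where
  "dwfit c k b f = c * k * exp (- k * (f / (1 - f)) + b)
     / ((1 - f)^2 * (1 + exp (- k * (f / (1 - f)) + b))^2)"

lemma has_real_derivative_wfit:
  assumes "f \<noteq> 1"
  shows "(wfit c k b has_real_derivative dwfit c k b f) (at f)"
proof -
  have "1 - f \<noteq> 0" using assms by simp
  moreover have "1 + exp (- k * (f / (1 - f)) + b) \<noteq> 0"
    by (smt (verit) exp_gt_zero)
  ultimately show ?thesis
    unfolding wfit_def[abs_def] dwfit_def
    by (auto intro!: derivative_eq_intros simp: field_simps power2_eq_square)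
qed

lemma J11_eq:
  "f \<noteq> 1 \<Longrightarrow> J11 c k b \<nu> f = dwfit c k b f * (f - f^2) + wfit c k b f * (1 - 2 * f) - \<nu>"
  unfolding J11_def by (metis has_real_derivative_wfit DERIV_imp_deriv)

lemma J11_half: "J11 c k b \<nu> (1/2) = lambda1 c k b \<nu>"
  by (simp add: J11_eq dwfit_def wfit_def lambda1_def power2_eq_square field_simps)

lemma eventually_J11_neg:
  assumes "lambda1 c k b \<nu> < 0"
  shows "eventually (\<lambda>f. f \<noteq> 1 \<and> J11 c k b \<nu> f < 0) (nhds (1/2))"
proof -
  let ?J = "\<lambda>f. dwfit c k b f * (f - f^2) + wfit c k b f * (1 - 2 * f) - \<nu>"
  have "\<And>y::real. 1 + exp y \<noteq> 0" by (smt (verit) exp_gt_zero)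
  then have "isCont ?J (1/2)"
    unfolding dwfit_def wfit_def by (intro continuous_intros) simp_all
  then have "(?J \<longlongrightarrow> ?J (1/2)) (nhds (1/2))"
    using isCont_def tendsto_at_iff_tendsto_nhds by blast
  moreover have "?J (1/2) < 0" using assms J11_eq[of "1/2"] J11_half by simp
  ultimately have "eventually (\<lambda>f. ?J f < 0) (nhds (1/2))"
    by (rule order_tendstoD)
  moreover have "eventually (\<lambda>f. f \<noteq> 1) (nhds (1/2::real))"
    by (rule t1_space_nhds) simp
  ultimately show ?thesis by eventually_elim (simp add: J11_eq)
qed

definition branch_h :: "real \<Rightarrow> real \<Rightarrow> real \<Rightarrow> real \<Rightarrow> real \<Rightarrow> real" where
  "branch_h c k b \<nu> f = \<nu> * f - wfit c k b f * (1 - f) * f"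

lemma has_real_derivative_branch_h:
  assumes "f \<noteq> 1"
  shows "(branch_h c k b \<nu> has_real_derivative - J11 c k b \<nu> f) (at f)"
  unfolding branch_h_def[abs_def] J11_eq[OF assms]
  by (auto intro!: derivative_eq_intros has_real_derivative_wfit[OF assms]
      simp: algebra_simps power2_eq_square)

lemma branch_h_half: "branch_h c k b \<nu> (1/2) = hss c k b \<nu>"
proof -
  have "1 + exp (b - k) \<noteq> 0" by (smt (verit) exp_gt_zero)
  then show ?thesis unfolding branch_h_def hss_def wfit_def by (simp add: field_simps)
qed

lemma fixed_point_x1_iff: "fixed_point c k b s \<nu> h f 1 \<longleftrightarrow> h = branch_h c k b \<nu> f"
  unfolding fixed_point_def rhs_f_def rhs_x_def branch_h_def by (auto simp: algebra_simps)

lemma fixed_point_f_half_iff: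
  "fixed_point c k b s \<nu> h (1/2) x \<longleftrightarrow> h * (2 * x - 1) = hss c k b \<nu>"
  using branch_h_half[of c k b \<nu>]
  unfolding fixed_point_def rhs_f_def rhs_x_def branch_h_def by (auto simp: algebra_simps)

lemma branch_h_increasing_near_half:
  assumes "lambda1 c k b \<nu> < 0"
  obtains d where "d > 0"
    "strict_mono_on {1/2 - d..1/2 + d} (branch_h c k b \<nu>)"
    "continuous_on {1/2 - d..1/2 + d} (branch_h c k b \<nu>)"
    "\<And>f. f \<in> {1/2 - d..1/2 + d} \<Longrightarrow> J11 c k b \<nu> f < 0"
proof -
  obtain r where "r > 0" and r: "\<And>f. dist f (1/2) < r \<Longrightarrow> f \<noteq> 1 \<and> J11 c k b \<nu> f < 0"
    using eventually_J11_neg[OF assms] unfolding eventually_nhds_metric by blast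
  define I where "I = {1/2 - r/2..1/2 + r/2}"
  have window: "f \<noteq> 1 \<and> J11 c k b \<nu> f < 0" if "f \<in> I" for f
    using r[of f] that \<open>r > 0\<close> by (auto simp: I_def dist_real_def)
  have deriv: "(branch_h c k b \<nu> has_real_derivative - J11 c k b \<nu> f) (at f)" if "f \<in> I" for f
    using window[OF that] by (simp add: has_real_derivative_branch_h)
  have "strict_mono_on I (branch_h c k b \<nu>)"
  proof (rule strict_mono_onI)
    fix u v assume "u \<in> I" "v \<in> I" "u < v"
    show "branch_h c k b \<nu> u < branch_h c k b \<nu> v"
    proof (rule DERIV_pos_imp_increasing[OF \<open>u < v\<close>])
      fix t assume "u \<le> t" "t \<le> v"
      then have "t \<in> I" using \<open>u \<in> I\<close> \<open>v \<in> I\<close> by (auto simp: I_def)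
      then show "\<exists>y. (branch_h c k b \<nu> has_real_derivative y) (at t) \<and> 0 < y"
        using deriv window by fastforce
    qed
  qed
  moreover have "continuous_on I (branch_h c k b \<nu>)"
    using deriv DERIV_isCont by (blast intro: continuous_at_imp_continuous_on)
  ultimately show ?thesis using that[of "r/2"] \<open>r > 0\<close> window by (simp add: I_def)
qed

lemma stable_fp_if_trace_neg_det_pos:
  assumes "J11 c k b \<nu> f + J22 s f x < 0" "J11 c k b \<nu> f * J22 s f x - J12 h * J21 s x > 0"
  shows "stable_fp c k b s \<nu> h f x"
  unfolding stable_fp_def jac_eigenvalue_def
  using char_root_Re_neg[OF assms] by simp

lemma unstable_fp_if_det_neg:
  assumes "J11 c k b \<nu> f * J22 s f x - J12 h * J21 s x < 0"
  shows "unstable_fp c k b s \<nu> h f x"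
  unfolding unstable_fp_def jac_eigenvalue_def
  using char_root_pos_if_det_neg[OF assms] by simp

lemma stability_on_x1_branch:
  assumes "s > 0" "J11 c k b \<nu> f < 0"
  shows "f < 1/2 \<Longrightarrow> stable_fp c k b s \<nu> h f 1"
    and "f > 1/2 \<Longrightarrow> unstable_fp c k b s \<nu> h f 1"
proof -
  have J22: "J22 s f 1 = s * (2 * f - 1)" and "J21 s 1 = 0"
    by (simp_all add: J22_def J21_def algebra_simps)
  show "stable_fp c k b s \<nu> h f 1" if "f < 1/2"
  proof (rule stable_fp_if_trace_neg_det_pos)
    have "J22 s f 1 < 0" using that assms by (simp add: J22 mult_pos_neg)
    then show "J11 c k b \<nu> f + J22 s f 1 < 0" "J11 c k b \<nu> f * J22 s f 1 - J12 h * J21 s 1 > 0"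
      using assms \<open>J21 s 1 = 0\<close> by (simp_all add: mult_neg_neg)
  qed
  show "unstable_fp c k b s \<nu> h f 1" if "f > 1/2"
  proof (rule unstable_fp_if_det_neg)
    have "J22 s f 1 > 0" using that assms by (simp add: J22)
    then show "J11 c k b \<nu> f * J22 s f 1 - J12 h * J21 s 1 < 0"
      using assms \<open>J21 s 1 = 0\<close> by (simp add: mult_neg_pos)
  qed
qed

lemma stability_on_f_half_branch:
  assumes "s > 0" "h > 0" "x > 0"
  shows "lambda1 c k b \<nu> < 0 \<Longrightarrow> x < 1 \<Longrightarrow> stable_fp c k b s \<nu> h (1/2) x"
    and "x > 1 \<Longrightarrow> unstable_fp c k b s \<nu> h (1/2) x"
proof -
  have det: "J11 c k b \<nu> (1/2) * J22 s (1/2) x - J12 h * J21 s x = 4 * h * s * x * (1 - x)"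
    by (simp add: J22_def J12_def J21_def)
  have trace: "J11 c k b \<nu> (1/2) + J22 s (1/2) x = lambda1 c k b \<nu>"
    by (simp add: J11_half J22_def)
  show "lambda1 c k b \<nu> < 0 \<Longrightarrow> x < 1 \<Longrightarrow> stable_fp c k b s \<nu> h (1/2) x"
    using assms by (intro stable_fp_if_trace_neg_det_pos) (simp_all only: det trace, simp)
  show "x > 1 \<Longrightarrow> unstable_fp c k b s \<nu> h (1/2) x"
    using assms by (intro unstable_fp_if_det_neg) (simp only: det, simp add: mult_pos_neg)
qed

lemma fixed_point_branches_persist:
  assumes "lambda1 c k b \<nu> < 0" "hss c k b \<nu> > 0"
  shows "\<forall>\<epsilon>>0. \<exists>\<eta>>0. \<forall>h. \<bar>h - hss c k b \<nu>\<bar> < \<eta> \<longrightarrow>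
          (\<exists>f. \<bar>f - 1/2\<bar> < \<epsilon> \<and> fixed_point c k b s \<nu> h f 1)
        \<and> (\<exists>x. \<bar>x - 1\<bar> < \<epsilon> \<and> fixed_point c k b s \<nu> h (1/2) x)"
proof (intro allI impI)
  fix \<epsilon> :: real assume "\<epsilon> > 0"
  obtain d where "d > 0" "strict_mono_on {1/2 - d..1/2 + d} (branch_h c k b \<nu>)"
    "continuous_on {1/2 - d..1/2 + d} (branch_h c k b \<nu>)"
    using branch_h_increasing_near_half[OF assms(1)] by blast
  from strict_mono_on_attains_nearby[OF this \<open>\<epsilon> > 0\<close>]
  obtain \<eta>\<^sub>1 where "\<eta>\<^sub>1 > 0"
    and f_branch: "\<And>h. \<bar>h - hss c k b \<nu>\<bar> < \<eta>\<^sub>1 \<Longrightarrow> \<exists>f. \<bar>f - 1/2\<bar> < \<epsilon> \<and> branch_h c k b \<nu> f = h"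
    unfolding branch_h_half by blast
  obtain \<eta>\<^sub>2 where "\<eta>\<^sub>2 > 0"
    and x_branch: "\<And>h. \<bar>h - hss c k b \<nu>\<bar> < \<eta>\<^sub>2 \<Longrightarrow> \<exists>x. \<bar>x - 1\<bar> < \<epsilon> \<and> h * (2 * x - 1) = hss c k b \<nu>"
    using exists_solution_near_one[OF assms(2) \<open>\<epsilon> > 0\<close>] by blast
  show "\<exists>\<eta>>0. \<forall>h. \<bar>h - hss c k b \<nu>\<bar> < \<eta> \<longrightarrow>
          (\<exists>f. \<bar>f - 1/2\<bar> < \<epsilon> \<and> fixed_point c k b s \<nu> h f 1)
        \<and> (\<exists>x. \<bar>x - 1\<bar> < \<epsilon> \<and> fixed_point c k b s \<nu> h (1/2) x)"
    using \<open>\<eta>\<^sub>1 > 0\<close> \<open>\<eta>\<^sub>2 > 0\<close> f_branch x_branch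
    by (intro exI[of _ "min \<eta>\<^sub>1 \<eta>\<^sub>2"]) (auto simp: fixed_point_x1_iff fixed_point_f_half_iff)
qed

lemma exchange_of_stability:
  assumes "s > 0" "lambda1 c k b \<nu> < 0" "hss c k b \<nu> > 0"
  shows "\<exists>\<delta>>0. \<forall>h f x.
          \<bar>h - hss c k b \<nu>\<bar> < \<delta> \<and> h \<noteq> hss c k b \<nu> \<and> \<bar>f - 1/2\<bar> < \<delta> \<and> \<bar>x - 1\<bar> < \<delta>
          \<and> fixed_point c k b s \<nu> h f x \<longrightarrow>
            (x = 1 \<longrightarrow>
               (h < hss c k b \<nu> \<longrightarrow> stable_fp c k b s \<nu> h f x)
             \<and> (h > hss c k b \<nu> \<longrightarrow> unstable_fp c k b s \<nu> h f x))
          \<and> (f = 1/2 \<longrightarrow>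
               (h < hss c k b \<nu> \<longrightarrow> unstable_fp c k b s \<nu> h f x)
             \<and> (h > hss c k b \<nu> \<longrightarrow> stable_fp c k b s \<nu> h f x))"
proof -
  let ?H = "hss c k b \<nu>"
  obtain d where "d > 0" and mono: "strict_mono_on {1/2 - d..1/2 + d} (branch_h c k b \<nu>)"
    and J11_neg: "\<And>f. f \<in> {1/2 - d..1/2 + d} \<Longrightarrow> J11 c k b \<nu> f < 0"
    using branch_h_increasing_near_half[OF assms(2)] by blast
  have "1/2 \<in> {1/2 - d..1/2 + d}" using \<open>d > 0\<close> by simp
  then have side: "branch_h c k b \<nu> f < ?H \<longleftrightarrow> f < 1/2" "?H < branch_h c k b \<nu> f \<longleftrightarrow> 1/2 < f"
    if "f \<in> {1/2 - d..1/2 + d}" for f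
    using strict_mono_on_less[OF mono] that by (simp_all flip: branch_h_half)
  define \<delta> where "\<delta> = min d (min 1 (?H/2))"
  have "\<delta> > 0" using \<open>d > 0\<close> assms(3) by (simp add: \<delta>_def)
  have "(x = 1 \<longrightarrow> (h < ?H \<longrightarrow> stable_fp c k b s \<nu> h f x) \<and> (h > ?H \<longrightarrow> unstable_fp c k b s \<nu> h f x))
      \<and> (f = 1/2 \<longrightarrow> (h < ?H \<longrightarrow> unstable_fp c k b s \<nu> h f x) \<and> (h > ?H \<longrightarrow> stable_fp c k b s \<nu> h f x))"
    if near: "\<bar>h - ?H\<bar> < \<delta>" "\<bar>f - 1/2\<bar> < \<delta>" "\<bar>x - 1\<bar> < \<delta>"
      and fp: "fixed_point c k b s \<nu> h f x" for h f x
  proof -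
    have "f \<in> {1/2 - d..1/2 + d}" "x > 0" "\<bar>h - ?H\<bar> < ?H/2"
      using near by (auto simp: \<delta>_def abs_less_iff)
    then have "h > 0" by linarith
    have on_x1: "(h < ?H \<longrightarrow> stable_fp c k b s \<nu> h f x) \<and> (h > ?H \<longrightarrow> unstable_fp c k b s \<nu> h f x)"
      if "x = 1"
    proof -
      have "h = branch_h c k b \<nu> f" using fp fixed_point_x1_iff \<open>x = 1\<close> by blast
      then show ?thesis
        using stability_on_x1_branch[OF assms(1) J11_neg] side \<open>f \<in> _\<close> \<open>x = 1\<close> by auto
    qed
    have on_f_half: "(h < ?H \<longrightarrow> unstable_fp c k b s \<nu> h f x) \<and> (h > ?H \<longrightarrow> stable_fp c k b s \<nu> h f x)"
      if "f = 1/2"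
    proof -
      have "h * (2 * x - 1) = ?H" using fp fixed_point_f_half_iff \<open>f = 1/2\<close> by blast
      then have "h < ?H \<longleftrightarrow> 1 < x" "?H < h \<longleftrightarrow> x < 1"
        using mult_less_cancel_left_pos[OF \<open>h > 0\<close>, of 1 "2 * x - 1"]
          mult_less_cancel_left_pos[OF \<open>h > 0\<close>, of "2 * x - 1" 1] by auto
      then show ?thesis
        using stability_on_f_half_branch[OF assms(1) \<open>h > 0\<close> \<open>x > 0\<close>, of c k b \<nu>] assms(2)
        unfolding \<open>f = 1/2\<close> by auto
    qed
    show ?thesis using on_x1 on_f_half by blast
  qed
  then show ?thesis using \<open>\<delta> > 0\<close> by (intro exI[of _ \<delta>]) blast
qed

theorem theorem5:
  fixes c k b s \<nu> :: real
  assumes "c > 0" "k > 0" "b > 0" "s > 0" "\<nu> > 0"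
    and "lambda1 c k b \<nu> < 0"
    and "hss c k b \<nu> > 0"
  shows "fixed_point c k b s \<nu> (hss c k b \<nu>) (1/2) 1
    \<and> (\<forall>\<epsilon>>0. \<exists>\<eta>>0. \<forall>h. \<bar>h - hss c k b \<nu>\<bar> < \<eta> \<longrightarrow>
          (\<exists>f. \<bar>f - 1/2\<bar> < \<epsilon> \<and> fixed_point c k b s \<nu> h f 1)
        \<and> (\<exists>x. \<bar>x - 1\<bar> < \<epsilon> \<and> fixed_point c k b s \<nu> h (1/2) x))
    \<and> (\<exists>\<delta>>0. \<forall>h f x.
          \<bar>h - hss c k b \<nu>\<bar> < \<delta> \<and> h \<noteq> hss c k b \<nu> \<and> \<bar>f - 1/2\<bar> < \<delta> \<and> \<bar>x - 1\<bar> < \<delta>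
          \<and> fixed_point c k b s \<nu> h f x \<longrightarrow>
            (x = 1 \<longrightarrow>
               (h < hss c k b \<nu> \<longrightarrow> stable_fp c k b s \<nu> h f x)
             \<and> (h > hss c k b \<nu> \<longrightarrow> unstable_fp c k b s \<nu> h f x))
          \<and> (f = 1/2 \<longrightarrow>
               (h < hss c k b \<nu> \<longrightarrow> unstable_fp c k b s \<nu> h f x)
             \<and> (h > hss c k b \<nu> \<longrightarrow> stable_fp c k b s \<nu> h f x)))"
  using fixed_point_x1_iff branch_h_half fixed_point_branches_persist[OF assms(6,7)]
    exchange_of_stability[OF assms(4,6,7)] by simp

end
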